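(* Let $S$ be a standard quantum entity on a finite-dimensional complex Hilbert space $\mathcal{H}$. For unit vectors $c,d\in\mathcal{H}$ with corresponding states $p_{\bar c},p_{\bar d}$, we have $p_{\bar c}\perp p_{\bar d}$ if and only if $c\perp d$ (i.e. $\langle c,d\rangle=0$).
   Context: A spectral family of $\mathcal{H}$ is a set $E=\{E_1,\dots,E_r\}$ of pairwise orthogonal nonzero orthogonal projections with $\sum_kE_k=I$. The standard quantum entity on $\mathcal{H}$ has states $p_{\bar c}$, one for each ray $\bar c$ (one-dimensional subspace generated by a unit vector $c$), experiments $e_E$, one for each spectral family $E$, outcomes $x_{E_k}$, one for each orthogonal projection $E_k$, and outcome sets $O(e_E,p_{\bar c})=\{x_{E_k}:E_k\in E,\ E_kc\neq0\}$. State orthogonality: $p\perp q$ iff there is an experiment $e$ with $O(e,p)\cap O(e,q)=\emptyset$. *)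

theory Defs
  imports "HOL-Analysis.Analysis"
begin

text \<open>The finite-dimensional complex Hilbert space is modelled as complex^'n for a finite
index type 'n (dimension CARD('n)); operators are complex^'n^'n matrices.\<close>

definition cinner :: "complex^'n \<Rightarrow> complex^'n \<Rightarrow> complex" where
  "cinner c d = (\<Sum>i\<in>UNIV. cnj (c $ i) * d $ i)"

definition cadjoint :: "complex^'n^'n \<Rightarrow> complex^'n^'n" where
  "cadjoint A = (\<chi> i j. cnj (A $ j $ i))"

definition orth_proj :: "complex^'n^'n \<Rightarrow> bool" where
  "orth_proj P \<longleftrightarrow> P ** P = P \<and> cadjoint P = P"

definition spectral_family :: "(complex^'n^'n) set \<Rightarrow> bool" where
  "spectral_family E \<longleftrightarrow> finite E
     \<and> (\<forall>P\<in>E. orth_proj P \<and> P \<noteq> 0)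
     \<and> (\<forall>P\<in>E. \<forall>Q\<in>E. P \<noteq> Q \<longrightarrow> P ** Q = 0)
     \<and> sum id E = mat 1"

text \<open>The state p_c is indexed by the ray generated by c.\<close>
definition ray :: "complex^'n \<Rightarrow> (complex^'n) set" where
  "ray c = {a *s c | a. True}"

text \<open>Outcome set O(e_E, p_r): outcomes x_{E_k} are identified with the projections E_k.
  For a ray r generated by a unit vector c, E_k c \<noteq> 0 iff E_k v \<noteq> 0 for some v in r.\<close>
definition outcome_set :: "(complex^'n^'n) set \<Rightarrow> (complex^'n) set \<Rightarrow> (complex^'n^'n) set" where
  "outcome_set E r = {P \<in> E. \<exists>v\<in>r. P *v v \<noteq> 0}"

definition state_orth :: "(complex^'n) set \<Rightarrow> (complex^'n) set \<Rightarrow> bool" where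
  "state_orth r s \<longleftrightarrow> (\<exists>E. spectral_family E \<and> outcome_set E r \<inter> outcome_set E s = {})"

end

theory Submission
  imports Defs
begin

text \<open>Two states are orthogonal iff some spectral family separates them, i.e. each of its
  projections annihilates c or d. If so, the resolution of the identity gives
  \<open>\<langle>c,d\<rangle> = \<Sum>\<^sub>k \<langle>c, E\<^sub>k d\<rangle> = \<Sum>\<^sub>k \<langle>E\<^sub>k c, d\<rangle> = 0\<close>, as every summand vanishes
  by self-adjointness of \<open>E\<^sub>k\<close>. Conversely, if c is a unit vector orthogonal to d \<noteq> 0, the
  rank-one projection P onto c and its complement I - P form a spectral family in
  which P annihilates d and I - P annihilates c.\<close>

lemma cinner_self_eq_norm_power2:
  fixes c :: "complex^'n"
  shows "cinner c c = complex_of_real ((norm c)\<^sup>2)"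
proof -
  have "(norm c)\<^sup>2 = (\<Sum>i\<in>UNIV. (cmod (c$i))\<^sup>2)"
    unfolding norm_vec_def L2_set_def by (simp add: sum_nonneg)
  moreover have "cnj (c$i) * c$i = complex_of_real ((cmod (c$i))\<^sup>2)" for i
    by (metis complex_norm_square mult.commute of_real_power)
  ultimately show ?thesis unfolding cinner_def by simp
qed

lemma cinner_zero_left [simp]: "cinner 0 d = 0"
  unfolding cinner_def by simp

lemma cinner_zero_right [simp]: "cinner c 0 = 0"
  unfolding cinner_def by simp

lemma cinner_scale_right: "cinner c (a *s d) = a * cinner c d"
  unfolding cinner_def by (simp add: sum_distrib_left mult_ac)

lemma cinner_sum_right: "cinner c (sum f E) = (\<Sum>P\<in>E. cinner c (f P))"
  unfolding cinner_def by (simp add: sum_component sum_distrib_left) (rule sum.swap)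

lemma cinner_matrix_vector_mult_right:
  fixes c d :: "complex^'n"
  shows "cinner c (A *v d) = cinner (cadjoint A *v c) d"
proof -
  have "cinner c (A *v d) = (\<Sum>i\<in>UNIV. \<Sum>j\<in>UNIV. cnj (c$i) * (A$i$j * d$j))"
    unfolding cinner_def matrix_vector_mult_def by (simp add: sum_distrib_left)
  also have "\<dots> = (\<Sum>j\<in>UNIV. \<Sum>i\<in>UNIV. cnj (c$i) * (A$i$j * d$j))"
    by (rule sum.swap)
  also have "\<dots> = cinner (cadjoint A *v c) d"
    unfolding cinner_def matrix_vector_mult_def cadjoint_def
    by (simp add: sum_distrib_left mult_ac)
  finally show ?thesis .
qed

lemma sum_matrix_vector_mult: "sum A E *v x = (\<Sum>P\<in>E. A P *v x)"
  by (induction E rule: infinite_finite_induct) (auto simp: matrix_vector_mult_add_rdistrib)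

lemma outcome_set_ray: "outcome_set E (ray c) = {P \<in> E. P *v c \<noteq> 0}"
  unfolding outcome_set_def ray_def
  by (auto simp: vector_scalar_commute intro: exI[of _ 1])

lemma state_orth_ray_iff:
  "state_orth (ray c) (ray d) \<longleftrightarrow>
     (\<exists>E. spectral_family E \<and> (\<forall>P\<in>E. P *v c = 0 \<or> P *v d = 0))"
  unfolding state_orth_def outcome_set_ray by blast

lemma cinner_eq_0_if_separated:
  assumes E: "spectral_family E" and separated: "\<forall>P\<in>E. P *v c = 0 \<or> P *v d = 0"
  shows "cinner c d = 0"
proof -
  have "cinner c d = cinner c (sum id E *v d)"
    using E unfolding spectral_family_def by simp
  also have "\<dots> = (\<Sum>P\<in>E. cinner c (P *v d))"
    by (simp add: sum_matrix_vector_mult cinner_sum_right)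
  also have "\<dots> = 0"
  proof (rule sum.neutral, rule ballI)
    fix P assume "P \<in> E"
    then have "cadjoint P = P"
      using E unfolding spectral_family_def orth_proj_def by blast
    then show "cinner c (P *v d) = 0"
      using separated \<open>P \<in> E\<close> cinner_matrix_vector_mult_right[of c P d] by auto
  qed
  finally show ?thesis .
qed

lemma cadjoint_diff: "cadjoint (A - B) = cadjoint A - cadjoint B"
  unfolding cadjoint_def by (simp add: vec_eq_iff)

lemma cadjoint_mat: "cadjoint (mat a) = mat (cnj a)"
  unfolding cadjoint_def by (simp add: vec_eq_iff mat_def)

lemma orth_proj_complement:
  assumes "orth_proj P"
  shows "orth_proj (mat 1 - P)"
proof -
  have "P *v (P *v x) = P *v x" for x
    using assms unfolding orth_proj_def by (simp add: matrix_vector_mul_assoc)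
  then have "(mat 1 - P) ** (mat 1 - P) *v x = (mat 1 - P) *v x" for x
    by (simp add: matrix_vector_mul_assoc[symmetric] matrix_vector_mult_diff_distrib
        matrix_vector_mult_diff_rdistrib)
  then have "(mat 1 - P) ** (mat 1 - P) = mat 1 - P"
    by (simp add: matrix_eq)
  moreover have "cadjoint (mat 1 - P) = mat 1 - P"
    using assms unfolding orth_proj_def by (simp add: cadjoint_diff cadjoint_mat)
  ultimately show ?thesis
    unfolding orth_proj_def ..
qed

lemma spectral_family_complement_pair:
  assumes P: "orth_proj P" and "P \<noteq> 0" and "P \<noteq> mat 1"
  shows "spectral_family {P, mat 1 - P}"
proof -
  have "P *v (P *v x) = P *v x" for x
    using P unfolding orth_proj_def by (simp add: matrix_vector_mul_assoc)
  then have PQ: "P ** (mat 1 - P) = 0" and QP: "(mat 1 - P) ** P = 0"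
    by (simp_all add: matrix_eq matrix_vector_mul_assoc[symmetric]
        matrix_vector_mult_diff_distrib matrix_vector_mult_diff_rdistrib)
  have "P \<noteq> mat 1 - P" \<comment> \<open>otherwise \<open>P = P ** P = P ** (mat 1 - P) = 0\<close>\<close>
    using PQ P \<open>P \<noteq> 0\<close> unfolding orth_proj_def by force
  then show ?thesis
    using assms orth_proj_complement[OF P] PQ QP unfolding spectral_family_def by auto
qed

definition rank_one_proj :: "complex^'n \<Rightarrow> complex^'n^'n" where
  "rank_one_proj c = (\<chi> i j. c$i * cnj (c$j))"

lemma rank_one_proj_mult_vec: "rank_one_proj c *v v = cinner c v *s c"
  unfolding rank_one_proj_def cinner_def matrix_vector_mult_def
  by (simp add: vec_eq_iff sum_distrib_left mult_ac)

lemma orth_proj_rank_one_proj: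
  assumes "norm c = 1"
  shows "orth_proj (rank_one_proj c)"
proof -
  have "cinner c c = 1"
    using assms by (simp add: cinner_self_eq_norm_power2)
  then have "rank_one_proj c ** rank_one_proj c = rank_one_proj c"
    by (simp add: matrix_eq matrix_vector_mul_assoc[symmetric] rank_one_proj_mult_vec
        cinner_scale_right)
  moreover have "cadjoint (rank_one_proj c) = rank_one_proj c"
    unfolding rank_one_proj_def cadjoint_def by (simp add: vec_eq_iff mult.commute)
  ultimately show ?thesis
    unfolding orth_proj_def by simp
qed

theorem mainTheorem15:
  fixes c d :: "complex^'n"
  assumes "norm c = 1" and "norm d = 1"
  shows "state_orth (ray c) (ray d) \<longleftrightarrow> cinner c d = 0"
proof
  assume "state_orth (ray c) (ray d)"
  then show "cinner c d = 0"
    unfolding state_orth_ray_iff using cinner_eq_0_if_separated by blast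
next
  assume cd: "cinner c d = 0"
  define P where "P = rank_one_proj c"
  have "cinner c c = 1"
    using assms(1) by (simp add: cinner_self_eq_norm_power2)
  then have Pc: "P *v c = c" and Pd: "P *v d = 0" and Qc: "(mat 1 - P) *v c = 0"
    using cd by (simp_all add: P_def rank_one_proj_mult_vec matrix_vector_mult_diff_rdistrib)
  have "c \<noteq> 0" and "d \<noteq> 0"
    using assms by auto
  then have "P \<noteq> 0" and "P \<noteq> mat 1"
    using Pc Pd by auto
  then have "spectral_family {P, mat 1 - P}"
    using spectral_family_complement_pair orth_proj_rank_one_proj[OF assms(1)] P_def by blast
  then show "state_orth (ray c) (ray d)"
    unfolding state_orth_ray_iff using Pd Qc by blast
qed

end
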